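(* Let $q$ be a power of the prime $p$, let $\alpha_1(x),\dots,\alpha_d(x),\beta_1(x),\dots,\beta_d(x)\in{\mathbb F}_q[x]$, and define $a\in{\mathbb F}_q[x]^{{\mathbb N}}$ by $a(n)=\beta_1(x)\alpha_1(x)^n+\cdots+\beta_d(x)\alpha_d(x)^n$. Suppose $k\ge2$ is such that $\deg\alpha_i(x)\le k$ and $\deg\beta_i(x)\le(p-1)k$ for all $i$. Then $\operatorname{comp}_p({\mathcal Z}(a))\le q^{d^2k^4p^4}$.
   Context: ${\mathbb N}=\{0,1,2,\dots\}$, ${\mathcal Z}(a)=\{n\in{\mathbb N}\mid a(n)=0\}$. For integers $k\ge1$, $j\ge0$ let $L^k_j:{\mathbb N}\to{\mathbb N}$, $L^k_j(n)=kn+j$. For $S\subseteq{\mathbb N}$ let ${\mathcal V}_S=\{(L^{p^r}_i)^{-1}(S)\mid r\in{\mathbb N},\ 0\le i<p^r\}$ (a set of subsets of ${\mathbb N}$), and $\operatorname{comp}_p(S)=|{\mathcal V}_S|$, the $p$-complexity of $S$. *)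

theory Defs
  imports "HOL-Computational_Algebra.Polynomial"
begin

definition zero_set :: "(nat \<Rightarrow> 'b::zero) \<Rightarrow> nat set" where
  "zero_set a = {n. a n = 0}"

definition Lmap :: "nat \<Rightarrow> nat \<Rightarrow> nat \<Rightarrow> nat" where
  "Lmap k j n = k * n + j"

definition kernel_sets :: "nat \<Rightarrow> nat set \<Rightarrow> nat set set" where
  "kernel_sets p S = {Lmap (p ^ r) i -` S | r i. i < p ^ r}"

definition comp_p :: "nat \<Rightarrow> nat set \<Rightarrow> nat" where
  "comp_p p S = card (kernel_sets p S)"

end

theory Submission
  imports Defs "HOL-Library.Function_Algebras" "HOL-Library.FuncSet" "HOL-Computational_Algebra.Primes"
begin

text \<open>
  For \<open>s < p\<close> the Cartier operator \<open>\<Lambda>_s\<close> on \<open>\<bbbF>_q[x]\<close> satisfies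
  \<open>\<Lambda>_s (g^p h) = g \<Lambda>_s h\<close>, and \<open>f = 0\<close> iff \<open>\<Lambda>_s f = 0\<close> for all \<open>s < p\<close>.
  Since \<open>\<alpha>^(pn + i) = (\<alpha>^n)^p \<alpha>^i\<close>, the substitution \<open>n \<mapsto> pn + i\<close> turns the common
  zero set of the sequences \<open>\<Sum>_j g_j \<alpha>_j^n\<close> (\<open>g \<in> G\<close>) into the common zero set of
  the coefficient vectors \<open>(\<Lambda>_s (g_j \<alpha>_j^i))_j\<close> (\<open>g \<in> G\<close>, \<open>s < p\<close>); the bound
  \<open>deg g_j \<le> (p - 1) k\<close> survives because \<open>\<Lambda>_s\<close> divides degrees by \<open>p\<close>.
  Hence every set in the \<open>p\<close>-kernel of \<open>\<Z>(a)\<close> is the common zero set of a family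
  of vectors in the \<open>\<bbbF>_q\<close>-space of degree-bounded coefficient vectors, which has
  dimension \<open>N = d((p - 1) k + 1)\<close>. That zero set only depends on the span of the
  family, and the span is generated by at most \<open>N\<close> members of it, so there are at
  most \<open>(q^N)^(N + 1)\<close> kernel sets.
\<close>

lemma pth_power_inj:
  fixes x y :: "'a::idom"
  assumes "prime p" "CHAR('a) = p" "x ^ p = y ^ p"
  shows "x = y"
proof -
  have "(x - y + y) ^ p = (x - y) ^ p + y ^ p"
    by (rule freshmans_dream) (use assms(1,2) in simp_all)
  then have "(x - y) ^ p + y ^ p = x ^ p"
    by simp
  then have "(x - y) ^ p = 0" using assms(3) by simp
  then show ?thesis
    using assms(1) prime_gt_0_nat by simp
qed

lemma (in vector_space) card_span_le:
  assumes "finite (UNIV :: 'a set)" and "finite B"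
  shows "finite (span B) \<and> card (span B) \<le> card (UNIV :: 'a set) ^ card B"
proof -
  let ?comb = "\<lambda>u. \<Sum>v\<in>B. u v *s v"
  have span: "span B \<subseteq> ?comb ` (B \<rightarrow>\<^sub>E UNIV)"
  proof
    fix x assume "x \<in> span B"
    then obtain u where "x = ?comb u"
      unfolding span_finite[OF assms(2)] by blast
    then have "x = ?comb (restrict u B)"
      by (simp cong: sum.cong)
    moreover have "restrict u B \<in> B \<rightarrow>\<^sub>E UNIV"
      by simp
    ultimately show "x \<in> ?comb ` (B \<rightarrow>\<^sub>E UNIV)"
      by (rule image_eqI)
  qed
  have fin: "finite (B \<rightarrow>\<^sub>E (UNIV :: 'a set))"
    using assms by (intro finite_PiE) auto
  have "card (span B) \<le> card (?comb ` (B \<rightarrow>\<^sub>E UNIV))"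
    using span fin by (intro card_mono) auto
  also have "\<dots> \<le> card (B \<rightarrow>\<^sub>E (UNIV :: 'a set))"
    by (rule card_image_le[OF fin])
  also have "\<dots> = card (UNIV :: 'a set) ^ card B"
    using assms(2) by (simp add: card_PiE)
  finally show ?thesis
    using span fin finite_subset by blast
qed

lemma sum_apply: "(\<Sum>a\<in>A. f a) x = (\<Sum>a\<in>A. f a x)"
  by (induction A rule: infinite_finite_induct) simp_all

lemma Lmap_mult_add: "Lmap (m * n) (m * j + i) = Lmap m i \<circ> Lmap n j"
  by (simp add: Lmap_def fun_eq_iff algebra_simps)

locale pth_root =
  fixes p :: nat and root :: "'a::field \<Rightarrow> 'a"
  assumes prime_p: "prime p" and CHAR_eq: "CHAR('a) = p"
    and root_power: "root x ^ p = x"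
begin

lemma p_pos: "p > 0"
  using prime_p prime_gt_0_nat by blast

lemma root_eqI: "y ^ p = x \<Longrightarrow> root x = y"
  by (rule pth_power_inj[OF prime_p CHAR_eq]) (simp add: root_power)

lemma root_eq_0_iff [simp]: "root x = 0 \<longleftrightarrow> x = 0"
  using root_power[of x] p_pos by (auto simp: zero_power)

lemma root_add: "root (x + y) = root x + root y"
  by (rule root_eqI) (simp add: freshmans_dream prime_p CHAR_eq root_power)

lemma root_power_mult: "root (c ^ p * x) = c * root x"
  by (rule root_eqI) (simp add: power_mult_distrib root_power)

text \<open>\<open>cartier s\<close> is the Cartier operator \<open>\<Lambda>_s\<close>, characterised by
  \<open>f = (\<Sum>s<p. monom 1 s * cartier s f ^ p)\<close>.\<close>

definition cartier :: "nat \<Rightarrow> 'a poly \<Rightarrow> 'a poly" where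
  "cartier s f = Poly (map (\<lambda>i. root (coeff f (p * i + s))) [0..<Suc (degree f)])"

lemma coeff_cartier: "coeff (cartier s f) i = root (coeff f (p * i + s))"
proof (cases "i < Suc (degree f)")
  case True
  then show ?thesis by (simp add: cartier_def nth_default_def del: upt_Suc)
next
  case False
  moreover have "i \<le> p * i"
    using p_pos by simp
  ultimately have "degree f < p * i + s"
    by linarith
  then show ?thesis using False by (simp add: cartier_def nth_default_def coeff_eq_0)
qed

lemma cartier_0 [simp]: "cartier s 0 = 0"
  by (rule poly_eqI) (simp add: coeff_cartier)

lemma cartier_add: "cartier s (f + g) = cartier s f + cartier s g"
  by (rule poly_eqI) (simp add: coeff_cartier root_add)

lemma cartier_sum: "cartier s (\<Sum>a\<in>A. f a) = (\<Sum>a\<in>A. cartier s (f a))"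
  by (induction A rule: infinite_finite_induct)
    (simp_all add: cartier_add)

lemma cartier_monom_mult:
  assumes "s < p"
  shows "cartier s (monom (c ^ p) (p * i) * h) = monom c i * cartier s h"
proof (rule poly_eqI)
  fix j
  have "(p * j + s) div p = j"
    using assms by simp
  then have "p * i \<le> p * j + s \<longleftrightarrow> i \<le> j"
    using less_eq_div_iff_mult_less_eq[OF p_pos, of i "p * j + s"] by (simp add: mult.commute)
  moreover have "i \<le> j \<Longrightarrow> p * j + s - p * i = p * (j - i) + s"
    by (simp add: diff_mult_distrib2)
  ultimately show "coeff (cartier s (monom (c ^ p) (p * i) * h)) j = coeff (monom c i * cartier s h) j"
    by (cases "i \<le> j") (simp_all add: coeff_cartier coeff_monom_mult root_power_mult)
qed

lemma pth_power_poly: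
  fixes g :: "'a poly"
  shows "g ^ p = (\<Sum>i\<le>degree g. monom (coeff g i ^ p) (p * i))"
proof -
  have "g ^ p = (\<Sum>i\<le>degree g. monom (coeff g i) i) ^ p"
    by (simp add: poly_as_sum_of_monoms)
  also have "\<dots> = (\<Sum>i\<le>degree g. monom (coeff g i) i ^ p)"
    by (rule freshmans_dream_sum) (simp_all add: CHAR_eq prime_p)
  finally show ?thesis by (simp add: monom_power mult.commute)
qed

lemma cartier_pth_power_mult:
  assumes "s < p"
  shows "cartier s (g ^ p * h) = g * cartier s h"
proof -
  have "cartier s (g ^ p * h) = (\<Sum>i\<le>degree g. cartier s (monom (coeff g i ^ p) (p * i) * h))"
    by (simp add: pth_power_poly sum_distrib_right cartier_sum)
  also have "\<dots> = (\<Sum>i\<le>degree g. monom (coeff g i) i) * cartier s h"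
    by (simp add: cartier_monom_mult assms sum_distrib_right)
  finally show ?thesis by (simp add: poly_as_sum_of_monoms)
qed

lemma cartier_eq_0_iff: "(\<forall>s<p. cartier s f = 0) \<longleftrightarrow> f = 0"
proof
  assume "\<forall>s<p. cartier s f = 0"
  then have "coeff (cartier (n mod p) f) (n div p) = 0" for n
    using p_pos by simp
  then show "f = 0"
    by (intro poly_eqI) (simp add: coeff_cartier)
qed simp

lemma degree_cartier_le: "degree (cartier s f) \<le> degree f div p"
proof (rule degree_le, intro allI impI)
  fix i assume "degree f div p < i"
  then have "degree f < p * i"
    using p_pos by (metis div_less_iff_less_mult mult.commute)
  then show "coeff (cartier s f) i = 0" by (simp add: coeff_cartier coeff_eq_0)
qed

end

lemma finite_field_pth_root:
  assumes "prime p" and "CHAR('a::{field,finite}) = p"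
  shows "\<exists>root :: 'a \<Rightarrow> 'a. pth_root p root"
proof
  have "inj (\<lambda>x::'a. x ^ p)"
    using pth_power_inj[OF assms] by (auto intro: injI)
  then have "surj (\<lambda>x::'a. x ^ p)"
    by (simp add: finite_UNIV_inj_surj)
  then have "inv (\<lambda>x::'a. x ^ p) y ^ p = y" for y
    using surj_f_inv_f[of "\<lambda>x::'a. x ^ p" y] by simp
  then show "pth_root p (inv (\<lambda>x::'a. x ^ p))"
    using assms by unfold_locales
qed

definition pow_comb :: "(nat \<Rightarrow> 'a::comm_semiring_1) \<Rightarrow> nat \<Rightarrow> (nat \<Rightarrow> 'a) \<Rightarrow> nat \<Rightarrow> 'a" where
  "pow_comb alpha d g n = (\<Sum>j<d. g j * alpha j ^ n)"

definition common_zeros :: "(nat \<Rightarrow> 'a::comm_semiring_1) \<Rightarrow> nat \<Rightarrow> (nat \<Rightarrow> 'a) set \<Rightarrow> nat set" where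
  "common_zeros alpha d G = {n. \<forall>g\<in>G. pow_comb alpha d g n = 0}"

definition scale_vector :: "'a::comm_ring_1 \<Rightarrow> ('b \<Rightarrow> 'a poly) \<Rightarrow> 'b \<Rightarrow> 'a poly" where
  "scale_vector c g j = smult c (g j)"

interpretation poly_vector: vector_space "scale_vector :: 'a::field \<Rightarrow> ('b \<Rightarrow> 'a poly) \<Rightarrow> _"
  by unfold_locales (simp_all add: scale_vector_def fun_eq_iff smult_add_right smult_add_left)

lemma pow_comb_0 [simp]: "pow_comb alpha d 0 n = 0"
  by (simp add: pow_comb_def)

lemma pow_comb_add: "pow_comb alpha d (g + h) n = pow_comb alpha d g n + pow_comb alpha d h n"
  by (simp add: pow_comb_def distrib_right sum.distrib)

lemma pow_comb_scale_vector:
  "pow_comb alpha d (scale_vector c g) n = smult c (pow_comb alpha d g n)"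
proof -
  have "smult c (pow_comb alpha d g n) = [:c:] * pow_comb alpha d g n"
    by simp
  also have "\<dots> = (\<Sum>j<d. [:c:] * (g j * alpha j ^ n))"
    by (simp only: pow_comb_def sum_distrib_left)
  finally show ?thesis
    by (simp add: pow_comb_def scale_vector_def)
qed

lemma common_zeros_span:
  "common_zeros alpha d (poly_vector.span B) = common_zeros alpha d B"
proof
  show "common_zeros alpha d (poly_vector.span B) \<subseteq> common_zeros alpha d B"
    using poly_vector.span_superset unfolding common_zeros_def by blast
  show "common_zeros alpha d B \<subseteq> common_zeros alpha d (poly_vector.span B)"
  proof
    fix n assume n: "n \<in> common_zeros alpha d B"
    have "poly_vector.subspace {g. pow_comb alpha d g n = 0}"
      by (rule poly_vector.subspaceI) (simp_all add: pow_comb_add pow_comb_scale_vector)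
    then have "poly_vector.span B \<subseteq> {g. pow_comb alpha d g n = 0}"
      using n by (intro poly_vector.span_minimal) (auto simp: common_zeros_def)
    then show "n \<in> common_zeros alpha d (poly_vector.span B)"
      by (auto simp: common_zeros_def)
  qed
qed

lemma common_zeros_eq_list:
  fixes G :: "(nat \<Rightarrow> 'a::field poly) set"
  assumes "finite E" and "G \<subseteq> poly_vector.span E" and "card E < m"
  shows "\<exists>xs. set xs \<subseteq> poly_vector.span E \<and> length xs = m
    \<and> common_zeros alpha d G = common_zeros alpha d (set xs)"
proof -
  obtain B where B: "B \<subseteq> G" "poly_vector.independent B" "G \<subseteq> poly_vector.span B"
    by (rule poly_vector.maximal_independent_subset)
  then have "finite B" "card B \<le> card E"
    using poly_vector.independent_span_bound[OF assms(1)] assms(2) by auto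
  then obtain ys where ys: "set ys = B" "length ys = card B"
    using finite_distinct_list distinct_card by metis
  define xs where "xs = ys @ replicate (m - card B) 0"
  have "set xs = insert 0 B"
    using \<open>card B \<le> card E\<close> assms(3) by (auto simp: xs_def ys)
  then have "common_zeros alpha d (set xs) = common_zeros alpha d B"
    by (simp add: common_zeros_def)
  also have "\<dots> = common_zeros alpha d G"
    using B common_zeros_span[of alpha d B] unfolding common_zeros_def by blast
  finally show ?thesis
    using \<open>set xs = insert 0 B\<close> B(1) assms(2) \<open>card B \<le> card E\<close> assms(3)
    by (intro exI[of _ xs]) (auto simp: xs_def ys poly_vector.span_zero)
qed

text \<open>Entries beyond \<open>d\<close> do not enter \<open>pow_comb\<close>; requiring them to vanish makes
  the set finite-dimensional.\<close>

definition bounded_vectors :: "nat \<Rightarrow> nat \<Rightarrow> (nat \<Rightarrow> 'a::zero poly) set" where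
  "bounded_vectors d D = {g. \<forall>j. (j < d \<longrightarrow> degree (g j) \<le> D) \<and> (d \<le> j \<longrightarrow> g j = 0)}"

definition unit_vectors :: "nat \<Rightarrow> nat \<Rightarrow> (nat \<Rightarrow> 'a::zero_neq_one poly) set" where
  "unit_vectors d D = (\<lambda>(j, e). 0(j := monom 1 e)) ` ({..<d} \<times> {..D})"

lemma finite_unit_vectors: "finite (unit_vectors d D)"
  by (simp add: unit_vectors_def)

lemma card_unit_vectors_le: "card (unit_vectors d D) \<le> d * (D + 1)"
  unfolding unit_vectors_def
  using card_image_le[of "{..<d} \<times> {..D}"] by (simp add: card_cartesian_product)

lemma bounded_vectors_subset_span:
  "(bounded_vectors d D :: (nat \<Rightarrow> 'a::field poly) set) \<subseteq> poly_vector.span (unit_vectors d D)"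
proof
  fix g :: "nat \<Rightarrow> 'a poly"
  assume g: "g \<in> bounded_vectors d D"
  have expansion: "g = (\<Sum>j<d. \<Sum>e\<le>D. scale_vector (coeff (g j) e) (0(j := monom 1 e)))"
  proof
    fix i
    have "(\<Sum>j<d. \<Sum>e\<le>D. scale_vector (coeff (g j) e) (0(j := monom 1 e))) i
        = (\<Sum>j<d. \<Sum>e\<le>D. if i = j then monom (coeff (g j) e) e else 0)"
      unfolding sum_apply by (intro sum.cong refl) (simp add: scale_vector_def smult_monom)
    also have "\<dots> = (\<Sum>j<d. if i = j then \<Sum>e\<le>D. monom (coeff (g j) e) e else 0)"
      by (intro sum.cong refl) simp
    also have "\<dots> = g i"
      using g by (auto simp: bounded_vectors_def poly_as_sum_of_monoms')
    finally show "g i = (\<Sum>j<d. \<Sum>e\<le>D. scale_vector (coeff (g j) e) (0(j := monom 1 e))) i"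
      by simp
  qed
  show "g \<in> poly_vector.span (unit_vectors d D)"
    by (subst expansion, intro poly_vector.span_sum poly_vector.span_scale poly_vector.span_base)
      (force simp: unit_vectors_def)
qed

context pth_root
begin

definition cartier_vector ::
    "(nat \<Rightarrow> 'a poly) \<Rightarrow> nat \<Rightarrow> nat \<Rightarrow> nat \<Rightarrow> (nat \<Rightarrow> 'a poly) \<Rightarrow> nat \<Rightarrow> 'a poly" where
  "cartier_vector alpha d i s g j = (if j < d then cartier s (g j * alpha j ^ i) else 0)"

lemma cartier_pow_comb:
  assumes "s < p"
  shows "cartier s (pow_comb alpha d g (p * n + i)) = pow_comb alpha d (cartier_vector alpha d i s g) n"
proof -
  have "pow_comb alpha d g (p * n + i) = (\<Sum>j<d. (alpha j ^ n) ^ p * (g j * alpha j ^ i))"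
    unfolding pow_comb_def
    by (intro sum.cong refl) (simp add: power_add power_mult mult.commute[of p n] ac_simps)
  also have "cartier s \<dots> = (\<Sum>j<d. alpha j ^ n * cartier s (g j * alpha j ^ i))"
    by (simp only: cartier_sum cartier_pth_power_mult[OF assms])
  finally show ?thesis
    by (simp add: pow_comb_def cartier_vector_def mult.commute)
qed

lemma vimage_Lmap_common_zeros:
  assumes "i < p"
  shows "Lmap p i -` common_zeros alpha d G = common_zeros alpha d (\<Union>s<p. cartier_vector alpha d i s ` G)"
proof -
  have "pow_comb alpha d g (p * n + i) = 0 \<longleftrightarrow> (\<forall>s<p. pow_comb alpha d (cartier_vector alpha d i s g) n = 0)"
    for g n
    using cartier_eq_0_iff[of "pow_comb alpha d g (p * n + i)"] by (simp add: cartier_pow_comb)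
  then show ?thesis
    by (auto simp: common_zeros_def Lmap_def)
qed

lemma cartier_vector_bounded:
  assumes "i < p" and "\<And>j. j < d \<Longrightarrow> degree (alpha j) \<le> k"
    and "g \<in> bounded_vectors d ((p - 1) * k)"
  shows "cartier_vector alpha d i s g \<in> bounded_vectors d ((p - 1) * k)"
proof -
  have "degree (cartier s (g j * alpha j ^ i)) \<le> (p - 1) * k" if "j < d" for j
  proof -
    have "degree (g j * alpha j ^ i) \<le> degree (g j) + i * degree (alpha j)"
      by (rule order_trans[OF degree_mult_le]) (use degree_power_le[of "alpha j" i] in \<open>simp add: mult.commute\<close>)
    also have "\<dots> \<le> (p - 1) * k + (p - 1) * k"
      using assms \<open>j < d\<close> by (intro add_mono mult_mono) (auto simp: bounded_vectors_def)
    also have "\<dots> \<le> p * ((p - 1) * k)"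
      using mult_le_mono1[OF prime_ge_2_nat[OF prime_p], of "(p - 1) * k"] by (simp only: mult_2)
    finally have "degree (g j * alpha j ^ i) div p \<le> p * ((p - 1) * k) div p"
      by (rule div_le_mono)
    then have "degree (g j * alpha j ^ i) div p \<le> (p - 1) * k"
      using p_pos by simp
    then show ?thesis
      using degree_cartier_le order_trans by blast
  qed
  then show ?thesis
    using assms(3) by (simp add: bounded_vectors_def cartier_vector_def)
qed

lemma kernel_sets_common_zeros:
  fixes alpha :: "nat \<Rightarrow> 'a poly"
  assumes "\<And>j. j < d \<Longrightarrow> degree (alpha j) \<le> k"
    and "G \<subseteq> bounded_vectors d ((p - 1) * k)"
    and "X \<in> kernel_sets p (common_zeros alpha d G)"
  shows "\<exists>G' \<subseteq> bounded_vectors d ((p - 1) * k). X = common_zeros alpha d G'"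
proof -
  obtain r i where "i < p ^ r" "X = Lmap (p ^ r) i -` common_zeros alpha d G"
    using assms(3) by (auto simp: kernel_sets_def)
  then show ?thesis
    using assms(2)
  proof (induction r arbitrary: G i)
    case 0
    then have "Lmap (p ^ 0) i = id"
      by (simp add: Lmap_def fun_eq_iff)
    then show ?case
      using 0 by auto
  next
    case (Suc r)
    let ?G = "\<Union>s<p. cartier_vector alpha d (i mod p) s ` G"
    have "i div p < p ^ r"
      using Suc.prems(1) by (simp add: less_mult_imp_div_less mult.commute)
    moreover have "Lmap (p ^ Suc r) i = Lmap p (i mod p) \<circ> Lmap (p ^ r) (i div p)"
      using Lmap_mult_add[of p "p ^ r" "i div p" "i mod p"] by simp
    then have "X = Lmap (p ^ r) (i div p) -` (Lmap p (i mod p) -` common_zeros alpha d G)"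
      using Suc.prems(2) by (simp only: vimage_comp)
    then have "X = Lmap (p ^ r) (i div p) -` common_zeros alpha d ?G"
      using p_pos by (simp add: vimage_Lmap_common_zeros)
    moreover have "cartier_vector alpha d (i mod p) s g \<in> bounded_vectors d ((p - 1) * k)"
      if "g \<in> G" for s g
      using p_pos Suc.prems(3) that by (intro cartier_vector_bounded assms(1)) auto
    then have "?G \<subseteq> bounded_vectors d ((p - 1) * k)"
      by blast
    ultimately show ?case
      by (rule Suc.IH)
  qed
qed

lemma kernel_sets_card_le:
  fixes alpha :: "nat \<Rightarrow> 'a poly"
  assumes "finite (UNIV :: 'a set)"
    and "\<And>j. j < d \<Longrightarrow> degree (alpha j) \<le> k"
    and "G \<subseteq> bounded_vectors d ((p - 1) * k)"
  defines "N \<equiv> d * ((p - 1) * k + 1)"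
  shows "finite (kernel_sets p (common_zeros alpha d G))
    \<and> card (kernel_sets p (common_zeros alpha d G)) \<le> card (UNIV :: 'a set) ^ (N * (N + 1))"
proof -
  let ?E = "unit_vectors d ((p - 1) * k) :: (nat \<Rightarrow> 'a poly) set"
  let ?V = "poly_vector.span ?E"
  let ?L = "{xs. set xs \<subseteq> ?V \<and> length xs = N + 1}"
  have E: "finite ?E" "card ?E \<le> N"
    using finite_unit_vectors card_unit_vectors_le unfolding N_def by blast+
  have "card (UNIV :: 'a set) ^ card ?E \<le> card (UNIV :: 'a set) ^ N"
    using E(2) assms(1) by (intro power_increasing) (simp_all add: Suc_leI finite_UNIV_card_ge_0)
  then have V: "finite ?V" "card ?V \<le> card (UNIV :: 'a set) ^ N"
    using poly_vector.card_span_le[OF assms(1) E(1)] by simp_all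
  have sub: "kernel_sets p (common_zeros alpha d G) \<subseteq> (\<lambda>xs. common_zeros alpha d (set xs)) ` ?L"
  proof
    fix X assume X: "X \<in> kernel_sets p (common_zeros alpha d G)"
    obtain G' where G': "G' \<subseteq> bounded_vectors d ((p - 1) * k)" "X = common_zeros alpha d G'"
      using kernel_sets_common_zeros[where alpha = alpha and d = d and k = k, OF assms(2,3) X] by blast
    have "G' \<subseteq> ?V" "card ?E < N + 1"
      using G'(1) bounded_vectors_subset_span E(2) by auto
    then obtain xs where "xs \<in> ?L" "X = common_zeros alpha d (set xs)"
      using common_zeros_eq_list[OF E(1)] G'(2) by blast
    then show "X \<in> (\<lambda>xs. common_zeros alpha d (set xs)) ` ?L"
      by blast
  qed
  have L: "finite ?L" "card ?L \<le> (card (UNIV :: 'a set) ^ N) ^ (N + 1)"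
    using V by (simp_all only: finite_lists_length_eq card_lists_length_eq power_mono)
  have "card (kernel_sets p (common_zeros alpha d G))
      \<le> card ((\<lambda>xs. common_zeros alpha d (set xs)) ` ?L)"
    using sub L(1) by (intro card_mono) auto
  also have "\<dots> \<le> card ?L"
    using L(1) by (rule card_image_le)
  also have "\<dots> \<le> card (UNIV :: 'a set) ^ (N * (N + 1))"
    using L(2) by (simp only: power_mult)
  finally show ?thesis
    using finite_subset[OF sub finite_imageI[OF L(1)]] by simp
qed

end

lemma exponent_bound:
  fixes d k p :: nat
  assumes "p \<ge> 2" and "k \<ge> 1"
  shows "d * ((p - 1) * k + 1) * (d * ((p - 1) * k + 1) + 1) \<le> d^2 * k^4 * p^4"
proof (cases "d = 0")
  case False
  have "(p - 1) * k = p * k - k" "k \<le> p * k"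
    using assms by (simp_all add: diff_mult_distrib)
  then have "(p - 1) * k + 1 \<le> p * k"
    using assms by linarith
  then have N: "d * ((p - 1) * k + 1) \<le> d * p * k"
    unfolding mult.assoc[of d p k] by (rule mult_le_mono2)
  moreover have "1 \<le> d * p * k"
    using False assms by simp
  ultimately have "d * ((p - 1) * k + 1) + 1 \<le> 2 * (d * p * k)"
    by linarith
  with N have "d * ((p - 1) * k + 1) * (d * ((p - 1) * k + 1) + 1) \<le> (d * p * k) * (2 * (d * p * k))"
    by (rule mult_le_mono)
  also have "\<dots> = 2 * (d^2 * p^2 * k^2)"
    by (simp add: power2_eq_square)
  also have "\<dots> \<le> (p^2 * k^2) * (d^2 * p^2 * k^2)"
  proof (rule mult_le_mono1)
    have "2 \<le> p * p"
      using mult_le_mono[OF assms(1), of 1 p] assms by simp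
    then show "2 \<le> p^2 * k^2"
      using assms(2) mult_le_mono[of 2 "p * p" 1 "k * k"] by (simp add: power2_eq_square)
  qed
  also have "\<dots> = d^2 * k^4 * p^4"
    by (simp add: power2_eq_square power4_eq_xxxx ac_simps)
  finally show ?thesis .
qed simp

theorem proposition6p5:
  fixes alpha beta :: "nat \<Rightarrow> 'a::{field,finite} poly"
    and p d k :: nat
  assumes "prime p" and "CHAR('a) = p"
    and "k \<ge> 2"
    and "\<And>i. i < d \<Longrightarrow> degree (alpha i) \<le> k"
    and "\<And>i. i < d \<Longrightarrow> degree (beta i) \<le> (p - 1) * k"
  shows "finite (kernel_sets p (zero_set (\<lambda>n. \<Sum>i<d. beta i * alpha i ^ n)))
    \<and> comp_p p (zero_set (\<lambda>n. \<Sum>i<d. beta i * alpha i ^ n))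
        \<le> card (UNIV :: 'a set) ^ (d^2 * k^4 * p^4)"
proof -
  obtain root :: "'a \<Rightarrow> 'a" where root: "pth_root p root"
    using finite_field_pth_root[OF assms(1,2)] by blast
  define beta' where "beta' j = (if j < d then beta j else 0)" for j
  define N where "N = d * ((p - 1) * k + 1)"
  have "zero_set (\<lambda>n. \<Sum>i<d. beta i * alpha i ^ n) = common_zeros alpha d {beta'}"
    by (simp add: zero_set_def common_zeros_def pow_comb_def beta'_def)
  moreover have "{beta'} \<subseteq> bounded_vectors d ((p - 1) * k)"
    using assms(5) by (simp add: bounded_vectors_def beta'_def)
  then have "finite (kernel_sets p (common_zeros alpha d {beta'}))
    \<and> card (kernel_sets p (common_zeros alpha d {beta'})) \<le> card (UNIV :: 'a set) ^ (N * (N + 1))"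
    unfolding N_def by (intro pth_root.kernel_sets_card_le[OF root finite_UNIV] assms(4))
  moreover have "card (UNIV :: 'a set) ^ (N * (N + 1)) \<le> card (UNIV :: 'a set) ^ (d^2 * k^4 * p^4)"
    using exponent_bound[of p k d] prime_ge_2_nat[OF assms(1)] assms(3) unfolding N_def
    by (intro power_increasing) (simp_all add: Suc_leI finite_UNIV_card_ge_0)
  ultimately show ?thesis
    unfolding comp_p_def by auto
qed

end
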